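(* Let $\lambda\in\mathbb{C}$, $\lambda\ne1$, $\alpha\in\mathbb{C}$, $c\in\mathbb{C}\setminus\{0\}$, and let $S_n(x)\sim\left(\left(\frac{e^{(\lambda-1)t}-\lambda}{1-\lambda}\right)^{\alpha},\ \frac{t^2(1+t)^c}{\log(1+t)}\right)$. Then for $n\ge1$, $$S_n(x)=\sum_{l=0}^{n-1}\binom{n-1}{l}N_l^{(n)}(-nc)\,A_{n-l}^{(\alpha)}(x\mid\lambda).$$
   Context: For invertible $g(t)$ (nonzero constant term) and delta series $f(t)$ ($f(0)=0$, nonzero coefficient of $t$), the Sheffer sequence $S_n(x)\sim(g(t),f(t))$ is the unique polynomial sequence with $\sum_{k\ge0}S_k(y)\frac{t^k}{k!}=\frac{1}{g(\bar f(t))}e^{y\bar f(t)}$ for all $y\in\mathbb{C}$, where $\bar f$ is the compositional inverse of $f$. Complex powers of series with constant term $1$ are defined by $h^a=\exp(a\log h)$. The Narumi polynomials of order $a$ are defined by $\left(\frac{\log(1+t)}{t}\right)^a(1+t)^x=\sum_{n\ge0}N_n^{(a)}(x)\frac{t^n}{n!}$. The Frobenius-type Eulerian polynomials of order $\alpha$ are defined by $\left(\frac{1-\lambda}{e^{(\lambda-1)t}-\lambda}\right)^{\alpha}e^{xt}=\sum_{n\ge0}A_n^{(\alpha)}(x\mid\lambda)\frac{t^n}{n!}$. *)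

theory Defs
  imports "HOL-Computational_Algebra.Computational_Algebra"
begin

abbreviation fps_log1p :: "complex fps" where
  "fps_log1p \<equiv> fps_ln 1"

text \<open>Complex power of a series h with constant term 1: h^a = exp(a log h),
  where log h = log(1 + (h - 1)).\<close>
definition fps_powc :: "complex fps \<Rightarrow> complex \<Rightarrow> complex fps" where
  "fps_powc h a = fps_exp a oo (fps_log1p oo (h - 1))"

text \<open>Sheffer sequence S ~ (g, f): for all y,
  sum_k S_k(y) t^k/k! = 1/g(fbar t) * exp(y fbar t).\<close>
definition sheffer :: "complex fps \<Rightarrow> complex fps \<Rightarrow> (nat \<Rightarrow> complex poly) \<Rightarrow> bool" where
  "sheffer g f S \<longleftrightarrow>
     (\<forall>y::complex. Abs_fps (\<lambda>k. poly (S k) y / fact k) =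
        inverse (g oo fps_inv f) * (fps_exp y oo fps_inv f))"

text \<open>Narumi polynomials: (log(1+t)/t)^a (1+t)^x = sum N_n^(a)(x) t^n/n!.
  log(1+t)/t is written as fps_shift 1 (log(1+t)).\<close>
definition narumi :: "complex \<Rightarrow> nat \<Rightarrow> complex \<Rightarrow> complex" where
  "narumi a n x = fact n * (fps_powc (fps_shift 1 fps_log1p) a * fps_powc (1 + fps_X) x) $ n"

definition frob_euler :: "complex \<Rightarrow> complex \<Rightarrow> nat \<Rightarrow> complex \<Rightarrow> complex" where
  "frob_euler al lam n x = fact n *
     (fps_powc (fps_const (1 - lam) * inverse (fps_exp (lam - 1) - fps_const lam)) al * fps_exp x) $ n"

end

theory Submission
  imports Defs
begin

text \<open>The delta series is \<open>f(t) = t/\<phi>(t)\<close> with \<open>\<phi>(t) = (log(1+t)/t) (1+t)^(-c)\<close>.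
  Lagrange inversion gives \<open>n [t^n] H(f^(-1)(t)) = [t^(n-1)] H'(t) \<phi>(t)^n\<close>, and for
  \<open>H(t) = e^(xt)/g(t)\<close> the left side is \<open>S\<^sub>n(x)/(n-1)!\<close>. On the right,
  \<open>\<phi>^n = (log(1+t)/t)^n (1+t)^(-nc)\<close> is the exponential generating function of the
  Narumi polynomials \<open>N\<^sub>l\<^sup>(\<^sup>n\<^sup>)(-nc)\<close> and \<open>H\<close> that of the Frobenius-type Eulerian
  polynomials, so the exponential convolution of \<open>\<phi>^n\<close> with \<open>H'\<close> is the binomial sum.\<close>

lemma fps_powc_nth_0 [simp]: "fps_powc h a $ 0 = 1"
  by (simp add: fps_powc_def)

lemma fps_powc_0 [simp]: "fps_powc h 0 = 1"
  by (simp add: fps_powc_def)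

lemma fps_powc_add: "fps_powc h a * fps_powc h b = fps_powc h (a + b)"
  by (simp add: fps_powc_def fps_exp_add_mult fps_compose_mult_distrib)

lemma fps_powc_power: "fps_powc h b ^ n = fps_powc h (of_nat n * b)"
  by (induct n) (simp_all add: fps_powc_add[symmetric] algebra_simps)

lemma fps_powc_minus: "fps_powc h (- a) = inverse (fps_powc h a)"
proof -
  have "fps_powc h (- a) * fps_powc h a = 1"
    by (simp add: fps_powc_add)
  then show ?thesis
    by (metis fps_inverse_unique mult.commute)
qed

lemma fps_exp_compose_log1p: "fps_exp (1::complex) oo fps_log1p = 1 + fps_X"
proof -
  have "fps_log1p = fps_inv (fps_exp 1 - 1)"
    by (rule fps_ln_fps_exp_inv) simp
  moreover have "(fps_exp (1::complex) - 1) oo fps_inv (fps_exp 1 - 1) = fps_X"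
    by (rule fps_inv_right) simp_all
  ultimately have "(fps_exp (1::complex) oo fps_log1p) - 1 = fps_X"
    by (simp add: fps_compose_sub_distrib)
  then show ?thesis
    by (simp add: algebra_simps)
qed

lemma fps_powc_1:
  assumes "h $ 0 = 1"
  shows "fps_powc h 1 = h"
proof -
  have "fps_powc h 1 = (fps_exp 1 oo fps_log1p) oo (h - 1)"
    unfolding fps_powc_def by (rule fps_compose_assoc) (simp_all add: assms)
  also have "\<dots> = h"
    by (simp add: fps_exp_compose_log1p fps_compose_add_distrib assms)
  finally show ?thesis .
qed

lemma fps_powc_of_nat:
  assumes "h $ 0 = 1"
  shows "fps_powc h (of_nat n) = h ^ n"
proof -
  have "fps_powc h (of_nat n) = fps_exp 1 ^ n oo (fps_log1p oo (h - 1))"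
    by (simp add: fps_powc_def fps_exp_power_mult)
  also have "\<dots> = fps_powc h 1 ^ n"
    by (simp add: fps_powc_def fps_compose_power)
  finally show ?thesis
    by (simp add: fps_powc_1 assms)
qed

lemma fps_deriv_log1p_compose:
  assumes "h $ 0 = 1"
  shows "fps_deriv (fps_log1p oo (h - 1)) = fps_deriv h * inverse h"
proof -
  have "fps_deriv (fps_log1p oo (h - 1)) = (inverse (1 + fps_X) oo (h - 1)) * fps_deriv h"
    using fps_compose_deriv[of "h - 1" fps_log1p] assms by (simp add: fps_ln_deriv)
  also have "inverse (1 + fps_X) oo (h - 1) = inverse ((1 + fps_X) oo (h - 1))"
    by (rule fps_inverse_compose) (simp_all add: assms)
  finally show ?thesis
    by (simp add: fps_compose_add_distrib assms)
qed

lemma fps_log1p_compose_inverse: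
  assumes "h $ 0 = 1"
  shows "fps_log1p oo (inverse h - 1) = - (fps_log1p oo (h - 1))"
proof -
  have "inverse h $ 0 = 1"
    using assms by simp
  then have "fps_deriv (fps_log1p oo (inverse h - 1)) = fps_deriv (- (fps_log1p oo (h - 1)))"
    using assms by (simp add: fps_deriv_log1p_compose fps_inverse_deriv power2_eq_square
        inverse_mult_eq_1)
  then have "fps_log1p oo (inverse h - 1)
      = fps_const ((fps_log1p oo (inverse h - 1)) $ 0 - (- (fps_log1p oo (h - 1))) $ 0)
        + - (fps_log1p oo (h - 1))"
    by (simp only: fps_deriv_eq_iff)
  then show ?thesis
    by simp
qed

lemma fps_powc_inverse:
  assumes "h $ 0 = 1"
  shows "fps_powc (inverse h) a = fps_powc h (- a)"
proof -
  have "fps_powc (inverse h) a = fps_exp a oo (- fps_X oo (fps_log1p oo (h - 1)))"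
    by (simp add: fps_powc_def fps_log1p_compose_inverse[OF assms] fps_compose_uminus)
  also have "\<dots> = (fps_exp a oo - fps_X) oo (fps_log1p oo (h - 1))"
    by (rule fps_compose_assoc) simp_all
  finally show ?thesis
    by (simp add: fps_powc_def)
qed

lemma fps_cutoff_eq_sum: "fps_cutoff n f = (\<Sum>i<n. fps_const (f $ i) * fps_X ^ i)"
proof (rule fps_ext)
  fix m
  have "(\<Sum>i<n. fps_const (f $ i) * fps_X ^ i) $ m = (\<Sum>i<n. if i = m then f $ i else 0)"
    by (simp add: fps_sum_nth fps_X_power_nth if_distrib cong: if_cong)
  then show "fps_cutoff n f $ m = (\<Sum>i<n. fps_const (f $ i) * fps_X ^ i) $ m"
    by (simp add: sum.delta)
qed

lemma fps_deriv_inverse_mult_power_nth: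
  fixes \<phi> :: "'a::field_char_0 fps"
  assumes "\<phi> $ 0 \<noteq> 0" and "j \<ge> 1"
  shows "(fps_deriv (inverse \<phi>) * \<phi> ^ (j + 1)) $ (j - 1) = - (\<phi> ^ j) $ j"
proof -
  have "fps_deriv (inverse \<phi>) * \<phi> ^ (j + 1)
      = - fps_deriv \<phi> * \<phi> ^ (j - 1) * (inverse \<phi> * \<phi>)\<^sup>2"
    using assms by (simp add: fps_inverse_deriv power2_eq_square power_add[symmetric]
        algebra_simps flip: power_Suc)
  then have "fps_deriv (inverse \<phi>) * \<phi> ^ (j + 1) = - fps_deriv \<phi> * \<phi> ^ (j - 1)"
    using assms by (simp add: inverse_mult_eq_1)
  moreover have "of_nat j * (fps_deriv \<phi> * \<phi> ^ (j - 1)) $ (j - 1) = of_nat j * (\<phi> ^ j) $ j"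
    using fps_deriv_nth[of "\<phi> ^ j" "j - 1"] assms
    by (simp add: fps_deriv_power' fps_of_nat mult.assoc)
  moreover have "(of_nat j :: 'a) \<noteq> 0"
    using assms by simp
  ultimately show ?thesis
    by simp
qed

lemma fps_lagrange_residue_nth:
  fixes \<phi> :: "'a::field_char_0 fps"
  assumes "\<phi> $ 0 \<noteq> 0" and "i < n"
  shows "((fps_X * inverse \<phi>) ^ i * fps_deriv (fps_X * inverse \<phi>) * \<phi> ^ n) $ (n - 1)
         = (if i = n - 1 then 1 else 0)"
proof -
  define \<psi> where "\<psi> = inverse \<phi>"
  define j where "j = n - 1 - i"
  have n: "n = i + j + 1"
    using assms(2) j_def by simp
  have inv: "\<psi> * \<phi> = 1"
    using assms(1) by (simp add: \<psi>_def inverse_mult_eq_1)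
  have "(fps_X * \<psi>) ^ i * fps_deriv (fps_X * \<psi>) * \<phi> ^ n
      = fps_X ^ i * ((\<psi> + fps_X * fps_deriv \<psi>) * \<phi> ^ (j + 1) * (\<psi> * \<phi>) ^ i)"
    unfolding n by (simp add: power_mult_distrib power_add fps_deriv_mult algebra_simps)
  also have "\<dots> = fps_X ^ i * (\<phi> ^ j + fps_X * (fps_deriv \<psi> * \<phi> ^ (j + 1)))"
    using inv by (simp add: algebra_simps)
  finally have "((fps_X * \<psi>) ^ i * fps_deriv (fps_X * \<psi>) * \<phi> ^ n) $ (n - 1)
      = (\<phi> ^ j) $ j + (if j = 0 then 0 else (fps_deriv \<psi> * \<phi> ^ (j + 1)) $ (j - 1))"
    using n by (simp add: fps_X_power_mult_nth fps_X_mult_nth)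
  also have "\<dots> = (if i = n - 1 then 1 else 0)"
    using n fps_deriv_inverse_mult_power_nth[OF assms(1), of j] by (simp add: \<psi>_def)
  finally show ?thesis
    by (simp add: \<psi>_def)
qed

text \<open>With \<open>K = H \<circ> f^(-1)\<close> we have \<open>H' = (K' \<circ> f) f'\<close>. The terms of \<open>K'\<close> of degree
  \<open>\<ge> n\<close> contribute multiples of \<open>f^n \<phi>^n = t^n\<close>, invisible at \<open>t^(n-1)\<close>; the remaining
  ones are picked out by the residue identity above.\<close>

lemma fps_lagrange_inversion:
  fixes \<phi> H :: "'a::field_char_0 fps"
  assumes "\<phi> $ 0 \<noteq> 0" and "n \<ge> 1"
  shows "of_nat n * (H oo fps_inv (fps_X * inverse \<phi>)) $ n = (fps_deriv H * \<phi> ^ n) $ (n - 1)"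
proof -
  define f where "f = fps_X * inverse \<phi>"
  define K where "K = H oo fps_inv f"
  define D where "D = fps_deriv K"
  have f0: "f $ 0 = 0"
    by (simp add: f_def)
  have f1: "f $ 1 \<noteq> 0"
    using assms(1) by (simp add: f_def fps_X_mult_nth)
  have "K oo f = H oo (fps_inv f oo f)"
    unfolding K_def by (rule fps_compose_assoc[symmetric]) (simp_all add: f0 fps_inv_def)
  then have "K oo f = H"
    using fps_inv[OF f0 f1] by simp
  then have H_deriv: "fps_deriv H = (D oo f) * fps_deriv f"
    unfolding D_def using fps_compose_deriv[OF f0, of K] by simp
  have D_split: "D oo f = (\<Sum>i<n. fps_const (D $ i) * f ^ i) + f ^ n * (fps_shift n D oo f)"
    by (subst fps_shift_cutoff'[of n D, symmetric])
      (simp add: fps_cutoff_eq_sum fps_compose_add_distrib fps_compose_sum_distrib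
        fps_compose_mult_distrib[OF f0] fps_compose_power[OF f0, symmetric] f0)
  have "fps_deriv H * \<phi> ^ n = (\<Sum>i<n. fps_const (D $ i) * (f ^ i * fps_deriv f * \<phi> ^ n))
        + fps_X ^ n * (inverse \<phi> ^ n * (fps_shift n D oo f) * fps_deriv f * \<phi> ^ n)"
    unfolding H_deriv D_split
    by (simp add: f_def power_mult_distrib algebra_simps sum_distrib_left sum_distrib_right)
  then have "(fps_deriv H * \<phi> ^ n) $ (n - 1)
      = (\<Sum>i<n. D $ i * (f ^ i * fps_deriv f * \<phi> ^ n) $ (n - 1))"
    using assms(2) by (simp add: fps_sum_nth fps_X_power_mult_nth)
  also have "\<dots> = (\<Sum>i<n. D $ i * (if i = n - 1 then 1 else 0))"
    unfolding f_def using fps_lagrange_residue_nth[OF assms(1)] by simp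
  also have "\<dots> = of_nat n * K $ n"
    using assms(2) by (simp add: D_def fps_deriv_nth if_distrib cong: if_cong)
  finally show ?thesis
    by (simp add: K_def f_def)
qed

lemma fact_mult_fps_deriv_nth:
  fixes A H :: "'a::{comm_semiring_1,semiring_char_0} fps"
  assumes "n \<ge> 1"
  shows "fact (n - 1) * (A * fps_deriv H) $ (n - 1)
         = (\<Sum>l = 0..n-1. of_nat ((n - 1) choose l) * (fact l * A $ l) * (fact (n - l) * H $ (n - l)))"
  unfolding fps_mult_nth sum_distrib_left
proof (intro sum.cong refl)
  fix l
  assume "l \<in> {0..n-1}"
  then have l: "l \<le> n - 1" and Suc_l: "n - l = Suc (n - 1 - l)"
    using assms by auto
  have binomial: "fact l * fact (n - 1 - l) * of_nat ((n - 1) choose l) = (fact (n - 1) :: 'a)"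
    using arg_cong[OF binomial_fact_lemma[OF l], of "of_nat :: nat \<Rightarrow> 'a"]
    by (simp only: of_nat_mult of_nat_fact)
  have fact_eq: "fact (n - l) = of_nat (n - l) * (fact (n - 1 - l) :: 'a)"
    unfolding Suc_l by (rule fact_Suc)
  have deriv_eq: "fps_deriv H $ (n - 1 - l) = of_nat (n - l) * H $ (n - l)"
    by (simp add: fps_deriv_nth Suc_l)
  show "fact (n - 1) * (A $ l * fps_deriv H $ (n - 1 - l))
      = of_nat ((n - 1) choose l) * (fact l * A $ l) * (fact (n - l) * H $ (n - l))"
    unfolding binomial[symmetric] fact_eq deriv_eq by (simp only: mult_ac)
qed

lemma sheffer_lagrange_expansion:
  fixes g \<phi> :: "complex fps"
  assumes "sheffer g (fps_X * inverse \<phi>) S" and "g $ 0 \<noteq> 0" and "\<phi> $ 0 \<noteq> 0" and "n \<ge> 1"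
  shows "poly (S n) x = (\<Sum>l = 0..n-1. of_nat ((n - 1) choose l) * (fact l * (\<phi> ^ n) $ l)
           * (fact (n - l) * (inverse g * fps_exp x) $ (n - l)))"
proof -
  define F where "F = fps_inv (fps_X * inverse \<phi>)"
  define H where "H = inverse g * fps_exp x"
  have F0: "F $ 0 = 0"
    by (simp add: F_def fps_inv_def)
  have "Abs_fps (\<lambda>k. poly (S k) x / fact k) = inverse (g oo F) * (fps_exp x oo F)"
    using assms(1) by (simp add: sheffer_def F_def)
  also have "\<dots> = H oo F"
    using assms(2) F0 by (simp add: H_def fps_inverse_compose fps_compose_mult_distrib)
  finally have "poly (S n) x / fact n = (H oo F) $ n"
    by (metis fps_nth_Abs_fps)
  then have "poly (S n) x = fact n * (H oo F) $ n"
    by (simp add: field_simps)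
  also have "\<dots> = fact (n - 1) * (of_nat n * (H oo F) $ n)"
    using assms(4) by (simp add: fact_reduce[of n])
  also have "\<dots> = fact (n - 1) * (\<phi> ^ n * fps_deriv H) $ (n - 1)"
    unfolding F_def fps_lagrange_inversion[OF assms(3,4)] by (simp add: mult.commute)
  finally show ?thesis
    unfolding fact_mult_fps_deriv_nth[OF assms(4)] H_def .
qed

theorem proposition8:
  fixes lam al c :: complex and S :: "nat \<Rightarrow> complex poly"
  assumes "lam \<noteq> 1" and "c \<noteq> 0"
    and "sheffer
           (fps_powc (fps_const (1 / (1 - lam)) * (fps_exp (lam - 1) - fps_const lam)) al)
           (fps_X * fps_powc (1 + fps_X) c * inverse (fps_shift 1 fps_log1p))
           S"
  shows "\<forall>n\<ge>1. \<forall>x. poly (S n) x =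
           (\<Sum>l = 0..n-1. of_nat ((n - 1) choose l) * narumi (of_nat n) l (- of_nat n * c)
              * frob_euler al lam (n - l) x)"
proof (intro allI impI)
  fix n :: nat and x :: complex
  assume n: "n \<ge> 1"
  define h where "h = fps_const (1 / (1 - lam)) * (fps_exp (lam - 1) - fps_const lam)"
  define \<phi> where "\<phi> = fps_shift 1 fps_log1p * inverse (fps_powc (1 + fps_X) c)"
  have h0: "h $ 0 = 1"
    using assms(1) by (simp add: h_def)
  have log_quotient0: "fps_shift 1 fps_log1p $ 0 = 1"
    by (simp add: fps_ln_nth)
  then have \<phi>0: "\<phi> $ 0 \<noteq> 0"
    by (simp add: \<phi>_def)
  have delta: "fps_X * fps_powc (1 + fps_X) c * inverse (fps_shift 1 fps_log1p) = fps_X * inverse \<phi>"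
    by (simp add: \<phi>_def fps_inverse_mult)
  have S: "sheffer (fps_powc h al) (fps_X * inverse \<phi>) S"
    using assms(3) by (simp only: h_def delta)
  have narumi: "fact l * (\<phi> ^ n) $ l = narumi (of_nat n) l (- of_nat n * c)" for l
    unfolding narumi_def \<phi>_def power_mult_distrib fps_powc_of_nat[OF log_quotient0, symmetric]
    by (simp add: fps_powc_power fps_inverse_power[symmetric] flip: fps_powc_minus)
  have "inverse (fps_powc h al) = fps_powc (inverse h) al"
    by (simp add: fps_powc_inverse[OF h0] fps_powc_minus)
  also have "inverse h = fps_const (1 - lam) * inverse (fps_exp (lam - 1) - fps_const lam)"
    using assms(1) by (simp add: h_def fps_inverse_mult fps_const_inverse)
  finally have frob_euler: "fact m * (inverse (fps_powc h al) * fps_exp x) $ m = frob_euler al lam m x"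
    for m by (simp add: frob_euler_def)
  show "poly (S n) x = (\<Sum>l = 0..n-1. of_nat ((n - 1) choose l)
      * narumi (of_nat n) l (- of_nat n * c) * frob_euler al lam (n - l) x)"
    using sheffer_lagrange_expansion[OF S _ \<phi>0 n] by (simp add: narumi frob_euler)
qed

end
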